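(* Let $\Omega\subset\mathbb{R}^d$ be open, $E$ a non-trivial locally convex Hausdorff space over $\mathbb{K}$ and $\mathcal{FV}(\Omega)$ a dom-space such that $\mathcal{FV}(\Omega)\subset\mathcal{C}^1(\Omega)$ as a linear subspace. If $\delta\in\mathcal{C}^1(\Omega,\mathcal{FV}(\Omega)'_\kappa)$, where $\delta(x):=\delta_x$, then for all $u\in\mathcal{FV}(\Omega)\varepsilon E$ we have $S(u)\in\mathcal{C}^1(\Omega,E)$ and $(\partial^{e_n})^E S(u)(x)=u(\delta_x\circ(\partial^{e_n})^{\mathbb{K}})$ for all $x\in\Omega$ and $1\le n\le d$.
   Context: $\mathbb{K}\in\{\mathbb{R},\mathbb{C}\}$. For a locally convex space $Z$ and $f\colon\Omega\to Z$, $(\partial^{e_n})^Z f(x):=\lim_{h\to0,\,h\in\mathbb{R}\setminus\{0\}}\frac{f(x+he_n)-f(x)}{h}$ ($e_n$ the $n$-th unit vector); $f\in\mathcal{C}^1(\Omega,Z)$ if these limits exist for all $x$, $n$ and each $(\partial^{e_n})^Z f$ is continuous; $\mathcal{C}^1(\Omega):=\mathcal{C}^1(\Omega,\mathbb{K})$. Framework: $J,M$ non-empty index sets, $(\omega_m)_{m\in M}$ non-empty sets, $\nu_{j,m}\colon\omega_m\to[0,\infty)$ such that for all $m$, $x\in\omega_m$ some $\nu_{j,m}(x)>0$; $\operatorname{AP}(\Omega)\subset\mathbb{K}^\Omega$ a linear subspace; $T_m\colon\operatorname{dom}T_m\to\mathbb{K}^{\omega_m}$ linear maps on linear subspaces of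 $\mathbb{K}^\Omega$; $\mathcal{FV}(\Omega):=\{f\in\operatorname{AP}(\Omega)\cap\bigcap_m\operatorname{dom}T_m: |f|_{j,m}:=\sup_{x\in\omega_m}|T_m(f)(x)|\nu_{j,m}(x)<\infty\ \forall j,m\}$ with these seminorms. It is a dom-space if it is Hausdorff, the seminorms are directed and every $\delta_x\colon f\mapsto f(x)$ belongs to $\mathcal{FV}(\Omega)'$. $\mathcal{FV}(\Omega)'_\kappa$: dual with the topology of uniform convergence on absolutely convex compact subsets of $\mathcal{FV}(\Omega)$. $\mathcal{FV}(\Omega)\varepsilon E$: continuous linear maps $\mathcal{FV}(\Omega)'_\kappa\to E$ with the topology of uniform convergence on equicontinuous sets; $S(u)(x):=u(\delta_x)$. $\delta_x\circ(\partial^{e_n})^{\mathbb{K}}$ is the functional $f\mapsto(\partial^{e_n})^{\mathbb{K}}f(x)$ on $\mathcal{FV}(\Omega)$. *)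

theory Defs
  imports "HOL-Analysis.Analysis" "HOL-Library.Function_Algebras"
begin

text \<open>A locally convex space is represented by a carrier V (a linear subspace of an
  abelian group type, with a scalar multiplication sm) and a set P of seminorms on V.\<close>

definition lc_topology :: "'v::ab_group_add set \<Rightarrow> ('v \<Rightarrow> real) set \<Rightarrow> 'v topology" where
  "lc_topology V P = topology (\<lambda>U. U \<subseteq> V \<and>
     (\<forall>x\<in>U. \<exists>F \<epsilon>. finite F \<and> F \<subseteq> P \<and> \<epsilon> > 0 \<and>
        {y\<in>V. \<forall>p\<in>F. p (y - x) < \<epsilon>} \<subseteq> U))"

definition subspace_on :: "('k::real_normed_field \<Rightarrow> 'v::ab_group_add \<Rightarrow> 'v) \<Rightarrow> 'v set \<Rightarrow> bool" where
  "subspace_on sm V \<longleftrightarrow> 0 \<in> V \<and> (\<forall>x\<in>V. \<forall>y\<in>V. x + y \<in> V) \<and> (\<forall>c. \<forall>x\<in>V. sm c x \<in> V)"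

definition seminorm_on :: "('k::real_normed_field \<Rightarrow> 'v::ab_group_add \<Rightarrow> 'v) \<Rightarrow> 'v set \<Rightarrow> ('v \<Rightarrow> real) \<Rightarrow> bool" where
  "seminorm_on sm V p \<longleftrightarrow> (\<forall>x\<in>V. 0 \<le> p x) \<and> (\<forall>x\<in>V. \<forall>y\<in>V. p (x + y) \<le> p x + p y)
     \<and> (\<forall>c. \<forall>x\<in>V. p (sm c x) = norm c * p x)"

definition lchs :: "('k::real_normed_field \<Rightarrow> 'v::ab_group_add \<Rightarrow> 'v) \<Rightarrow> 'v set \<Rightarrow> ('v \<Rightarrow> real) set \<Rightarrow> bool" where
  "lchs sm V P \<longleftrightarrow> subspace_on sm V \<and> (\<forall>p\<in>P. seminorm_on sm V p)
     \<and> (\<forall>x\<in>V. (\<forall>p\<in>P. p x = 0) \<longrightarrow> x = 0)"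

definition linear_on :: "('k \<Rightarrow> 'v::ab_group_add \<Rightarrow> 'v) \<Rightarrow> ('k \<Rightarrow> 'w::ab_group_add \<Rightarrow> 'w)
    \<Rightarrow> 'v set \<Rightarrow> ('v \<Rightarrow> 'w) \<Rightarrow> bool" where
  "linear_on sm1 sm2 V f \<longleftrightarrow> (\<forall>x\<in>V. \<forall>y\<in>V. f (x + y) = f x + f y) \<and> (\<forall>c. \<forall>x\<in>V. f (sm1 c x) = sm2 c (f x))"

definition fsm :: "'k::real_normed_field \<Rightarrow> ('a \<Rightarrow> 'k) \<Rightarrow> ('a \<Rightarrow> 'k)" where
  "fsm c f = (\<lambda>x. c * f x)"

definition has_pderiv_in :: "'z::ab_group_add topology \<Rightarrow> ('k::real_normed_field \<Rightarrow> 'z \<Rightarrow> 'z)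
    \<Rightarrow> (real^'n \<Rightarrow> 'z) \<Rightarrow> 'n \<Rightarrow> real^'n \<Rightarrow> 'z \<Rightarrow> bool" where
  "has_pderiv_in Z sm f n x L \<longleftrightarrow>
     limitin Z (\<lambda>h::real. sm (of_real (inverse h)) (f (x + h *\<^sub>R axis n 1) - f x)) L (at 0)"

definition pderiv_in :: "'z::ab_group_add topology \<Rightarrow> ('k::real_normed_field \<Rightarrow> 'z \<Rightarrow> 'z)
    \<Rightarrow> (real^'n \<Rightarrow> 'z) \<Rightarrow> 'n \<Rightarrow> real^'n \<Rightarrow> 'z" where
  "pderiv_in Z sm f n x = (THE L. has_pderiv_in Z sm f n x L)"

definition C1_on :: "(real^'n) set \<Rightarrow> 'z::ab_group_add topology \<Rightarrow> ('k::real_normed_field \<Rightarrow> 'z \<Rightarrow> 'z)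
    \<Rightarrow> (real^'n \<Rightarrow> 'z) \<Rightarrow> bool" where
  "C1_on \<Omega> Z sm f \<longleftrightarrow> f ` \<Omega> \<subseteq> topspace Z \<and>
     (\<forall>n. (\<forall>x\<in>\<Omega>. \<exists>L. has_pderiv_in Z sm f n x L) \<and>
          continuous_map (top_of_set \<Omega>) Z (\<lambda>x. pderiv_in Z sm f n x))"

text \<open>Functions \<open>\<Omega> \<rightarrow> \<bbbK>\<close> are represented by functions on \<open>\<real>^d\<close> vanishing outside \<open>\<Omega>\<close>.\<close>
definition fun_on :: "'a set \<Rightarrow> ('a \<Rightarrow> 'k::zero) set" where
  "fun_on \<Omega> = {f. \<forall>x. x \<notin> \<Omega> \<longrightarrow> f x = 0}"

definition fv_framework ::
  "'a set \<Rightarrow> ('a \<Rightarrow> 'k::real_normed_field) set \<Rightarrow> ('m \<Rightarrow> ('a \<Rightarrow> 'k) set)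
   \<Rightarrow> ('m \<Rightarrow> ('a \<Rightarrow> 'k) \<Rightarrow> 'w \<Rightarrow> 'k) \<Rightarrow> ('m \<Rightarrow> 'w set) \<Rightarrow> ('j \<Rightarrow> 'm \<Rightarrow> 'w \<Rightarrow> real) \<Rightarrow> bool" where
  "fv_framework \<Omega> AP domT T \<omega> \<nu> \<longleftrightarrow>
     (\<forall>m. \<omega> m \<noteq> {}) \<and> (\<forall>j m x. 0 \<le> \<nu> j m x) \<and> (\<forall>m. \<forall>x\<in>\<omega> m. \<exists>j. 0 < \<nu> j m x) \<and>
     AP \<subseteq> fun_on \<Omega> \<and> subspace_on fsm AP \<and>
     (\<forall>m. domT m \<subseteq> fun_on \<Omega> \<and> subspace_on fsm (domT m) \<and> linear_on fsm fsm (domT m) (T m))"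

definition fv_sn :: "('m \<Rightarrow> ('a \<Rightarrow> 'k::real_normed_field) \<Rightarrow> 'w \<Rightarrow> 'k) \<Rightarrow> ('m \<Rightarrow> 'w set)
    \<Rightarrow> ('j \<Rightarrow> 'm \<Rightarrow> 'w \<Rightarrow> real) \<Rightarrow> 'j \<Rightarrow> 'm \<Rightarrow> ('a \<Rightarrow> 'k) \<Rightarrow> real" where
  "fv_sn T \<omega> \<nu> j m f = (SUP x\<in>\<omega> m. norm (T m f x) * \<nu> j m x)"

definition FV ::
  "('a \<Rightarrow> 'k::real_normed_field) set \<Rightarrow> ('m \<Rightarrow> ('a \<Rightarrow> 'k) set)
   \<Rightarrow> ('m \<Rightarrow> ('a \<Rightarrow> 'k) \<Rightarrow> 'w \<Rightarrow> 'k) \<Rightarrow> ('m \<Rightarrow> 'w set) \<Rightarrow> ('j \<Rightarrow> 'm \<Rightarrow> 'w \<Rightarrow> real) \<Rightarrow> ('a \<Rightarrow> 'k) set" where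
  "FV AP domT T \<omega> \<nu> = {f \<in> AP. (\<forall>m. f \<in> domT m) \<and>
      (\<forall>j m. bdd_above ((\<lambda>x. norm (T m f x) * \<nu> j m x) ` \<omega> m))}"

definition FV_seminorms :: "('m \<Rightarrow> ('a \<Rightarrow> 'k::real_normed_field) \<Rightarrow> 'w \<Rightarrow> 'k) \<Rightarrow> ('m \<Rightarrow> 'w set)
    \<Rightarrow> ('j \<Rightarrow> 'm \<Rightarrow> 'w \<Rightarrow> real) \<Rightarrow> (('a \<Rightarrow> 'k) \<Rightarrow> real) set" where
  "FV_seminorms T \<omega> \<nu> = {fv_sn T \<omega> \<nu> j m | j m. True}"

text \<open>Continuous linear functionals on (V, P); represented as functions vanishing outside V.\<close>
definition dual :: "('a \<Rightarrow> 'k::real_normed_field) set \<Rightarrow> (('a \<Rightarrow> 'k) \<Rightarrow> real) set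
    \<Rightarrow> (('a \<Rightarrow> 'k) \<Rightarrow> 'k) set" where
  "dual V P = {\<phi>. linear_on fsm (*) V \<phi> \<and> continuous_map (lc_topology V P) euclidean \<phi>
                  \<and> (\<forall>f. f \<notin> V \<longrightarrow> \<phi> f = 0)}"

definition abs_convex :: "('k::real_normed_field \<Rightarrow> 'v::ab_group_add \<Rightarrow> 'v) \<Rightarrow> 'v set \<Rightarrow> bool" where
  "abs_convex sm K \<longleftrightarrow> K \<noteq> {} \<and>
     (\<forall>x\<in>K. \<forall>y\<in>K. \<forall>a b. norm a + norm b \<le> 1 \<longrightarrow> sm a x + sm b y \<in> K)"

definition kappa_seminorms :: "('a \<Rightarrow> 'k::real_normed_field) set \<Rightarrow> (('a \<Rightarrow> 'k) \<Rightarrow> real) set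
    \<Rightarrow> ((('a \<Rightarrow> 'k) \<Rightarrow> 'k) \<Rightarrow> real) set" where
  "kappa_seminorms V P = {(\<lambda>\<phi>. SUP f\<in>K. norm (\<phi> f)) | K.
       K \<subseteq> V \<and> abs_convex fsm K \<and> compactin (lc_topology V P) K}"

definition delta :: "('a \<Rightarrow> 'k::real_normed_field) set \<Rightarrow> 'a \<Rightarrow> ('a \<Rightarrow> 'k) \<Rightarrow> 'k" where
  "delta V x = (\<lambda>f. if f \<in> V then f x else 0)"

definition dom_space ::
  "'a set \<Rightarrow> ('a \<Rightarrow> 'k::real_normed_field) set \<Rightarrow> ('m \<Rightarrow> ('a \<Rightarrow> 'k) set)
   \<Rightarrow> ('m \<Rightarrow> ('a \<Rightarrow> 'k) \<Rightarrow> 'w \<Rightarrow> 'k) \<Rightarrow> ('m \<Rightarrow> 'w set) \<Rightarrow> ('j \<Rightarrow> 'm \<Rightarrow> 'w \<Rightarrow> real) \<Rightarrow> bool" where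
  "dom_space \<Omega> AP domT T \<omega> \<nu> \<longleftrightarrow>
     (let V = FV AP domT T \<omega> \<nu> in
       (\<forall>f\<in>V. (\<forall>j m. fv_sn T \<omega> \<nu> j m f = 0) \<longrightarrow> f = 0) \<and>
       (\<forall>j1 m1 j2 m2. \<exists>j3 m3 C. 0 < C \<and> (\<forall>f\<in>V.
           max (fv_sn T \<omega> \<nu> j1 m1 f) (fv_sn T \<omega> \<nu> j2 m2 f) \<le> C * fv_sn T \<omega> \<nu> j3 m3 f)) \<and>
       (\<forall>x\<in>\<Omega>. delta V x \<in> dual V (FV_seminorms T \<omega> \<nu>)))"

definition eps_product :: "('a \<Rightarrow> 'k::real_normed_field) set \<Rightarrow> (('a \<Rightarrow> 'k) \<Rightarrow> real) set
    \<Rightarrow> ('k \<Rightarrow> 'e::ab_group_add \<Rightarrow> 'e) \<Rightarrow> ('e \<Rightarrow> real) set \<Rightarrow> ((('a \<Rightarrow> 'k) \<Rightarrow> 'k) \<Rightarrow> 'e) set" where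
  "eps_product V P smE PE = {u. linear_on fsm smE (dual V P) u \<and>
      continuous_map (lc_topology (dual V P) (kappa_seminorms V P)) (lc_topology UNIV PE) u}"

end

theory Submission
  imports Defs
begin

text \<open>
  Differentiating under \<open>u\<close>: the difference quotients of \<open>x \<mapsto> u(\<delta>\<^sub>x)\<close> are the images under the
  continuous linear map \<open>u\<close> of the difference quotients of \<open>\<delta>\<close>, so they converge in \<open>E\<close> to
  \<open>u\<close> of the derivative of \<open>\<delta>\<close>. That derivative is identified through the evaluations
  \<open>\<phi> \<mapsto> \<phi>(f)\<close>, which are \<open>\<kappa>\<close>-continuous because \<open>{c f | \<bar>c\<bar> \<le> 1}\<close> is an absolutely convex
  compact set. The latter needs the closed unit ball of the scalar field to be compact, i.e.
  that a real normed field is \<open>\<real>\<close> or \<open>\<complex>\<close> (Mazur): every element is a root of a real quadratic,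
  shown by minimising \<open>w \<mapsto> \<parallel>(x - Re w)\<^sup>2 + (Im w)\<^sup>2\<parallel>\<close> over \<open>\<complex>\<close> and computing in the
  complexification of the field.
\<close>

section \<open>Real normed fields have compact unit balls\<close>

text \<open>\<open>CX a b\<close> stands for \<open>a + i b\<close> in the complexification of \<open>'a\<close>.\<close>
datatype 'a cx = CX (cre: 'a) (cim: 'a)

instantiation cx :: (comm_ring_1) comm_ring_1
begin
definition "0 = CX 0 0"
definition "1 = CX 1 0"
definition "x + y = CX (cre x + cre y) (cim x + cim y)"
definition "x - y = CX (cre x - cre y) (cim x - cim y)"
definition "- x = CX (- cre x) (- cim x)"
definition "x * y = CX (cre x * cre y - cim x * cim y) (cre x * cim y + cim x * cre y)"
instance
  by standard (auto simp: zero_cx_def one_cx_def plus_cx_def minus_cx_def uminus_cx_def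
      times_cx_def cx.expand algebra_simps)
end

lemma cx_simps [simp]:
  "cre (x + y) = cre x + cre y" "cim (x + y) = cim x + cim y"
  "cre (x - y) = cre x - cre y" "cim (x - y) = cim x - cim y"
  "cre (x * y) = cre x * cre y - cim x * cim y" "cim (x * y) = cre x * cim y + cim x * cre y"
  "cre (- x) = - cre x" "cim (- x) = - cim x"
  "cre 0 = 0" "cim 0 = 0" "cre 1 = 1" "cim 1 = 0"
  by (simp_all add: zero_cx_def one_cx_def plus_cx_def minus_cx_def uminus_cx_def times_cx_def)

definition cx_of_complex :: "complex \<Rightarrow> 'k::real_normed_field cx" where
  "cx_of_complex w = CX (of_real (Re w)) (of_real (Im w))"

definition cx_of :: "'k::real_normed_field \<Rightarrow> 'k cx" where
  "cx_of k = CX k 0"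

text \<open>Multiplicative, although the complexification is in general not a field.\<close>
definition cx_normsq :: "'k::real_normed_field cx \<Rightarrow> real" where
  "cx_normsq z = norm (cre z * cre z + cim z * cim z)"

lemma cx_of_complex_hom:
  "cx_of_complex (w * z) = (cx_of_complex w * cx_of_complex z :: 'k::real_normed_field cx)"
  "cx_of_complex (w - z) = (cx_of_complex w - cx_of_complex z :: 'k cx)"
  "cx_of_complex (w + z) = (cx_of_complex w + cx_of_complex z :: 'k cx)"
  "cx_of_complex (- w) = (- cx_of_complex w :: 'k cx)"
  "cx_of_complex 1 = (1 :: 'k cx)"
  by (rule cx.expand; simp add: cx_of_complex_def of_real_mult of_real_diff of_real_add)+

lemma cx_of_complex_power: "cx_of_complex (w ^ n) = (cx_of_complex w ^ n :: 'k::real_normed_field cx)"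
  by (induction n) (simp_all add: cx_of_complex_hom)

lemma cx_of_hom:
  "cx_of (a * b) = cx_of a * cx_of b" "cx_of (a - b) = cx_of a - cx_of b"
  "cx_of (a + b) = cx_of a + cx_of b" "cx_of 1 = 1"
  "cx_of (of_real r) = cx_of_complex (of_real r)"
  by (rule cx.expand; simp add: cx_of_def cx_of_complex_def)+

lemma cx_of_power: "cx_of (a ^ n) = cx_of a ^ n"
  by (induction n) (simp_all add: cx_of_hom)

lemma cx_normsq_mult: "cx_normsq (z * w) = cx_normsq z * cx_normsq w"
proof -
  have "(cre z * cre w - cim z * cim w) * (cre z * cre w - cim z * cim w) +
        (cre z * cim w + cim z * cre w) * (cre z * cim w + cim z * cre w)
      = (cre z * cre z + cim z * cim z) * (cre w * cre w + cim w * cim w)"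
    by (simp add: algebra_simps)
  then show ?thesis by (simp add: cx_normsq_def norm_mult)
qed

lemma cx_normsq_prod_list:
  "cx_normsq (prod_list (map g ws)) = prod_list (map (\<lambda>w. cx_normsq (g w)) ws)"
  by (induction ws) (simp_all add: cx_normsq_mult, simp add: cx_normsq_def)

lemma cx_normsq_cx_of: "cx_normsq (cx_of k) = norm k ^ 2"
  by (simp add: cx_normsq_def cx_of_def norm_mult power2_eq_square)

text \<open>\<open>Y^(2n) - c^(2n) = (Y^n - c^n)(Y^n - d^n)\<close> with \<open>d = c \<omega>\<close>, \<open>\<omega>\<close> a primitive \<open>2n\<close>-th root of unity.\<close>
lemma cx_pow2_diff_factor:
  "\<exists>ws. length ws = 2^k - 1 \<and> (\<forall>Y::'k::real_normed_field cx.
      Y ^ (2^k) - cx_of_complex c ^ (2^k) = (Y - cx_of_complex c) * prod_list (map (\<lambda>w. Y - cx_of_complex w) ws))"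
proof (induction k arbitrary: c)
  case 0
  then show ?case by (intro exI[of _ "[]"]) simp
next
  case (Suc k)
  define d where "d = c * cis (pi / 2^k)"
  have "cis (pi / 2^k) ^ (2^k) = -1"
    by (simp only: Complex.DeMoivre) simp
  then have "d ^ (2^k) = - (c ^ (2^k))"
    by (simp add: d_def power_mult_distrib)
  then have d: "(cx_of_complex d :: 'k cx) ^ (2^k) = - (cx_of_complex c ^ (2^k))"
    by (metis cx_of_complex_hom(4) cx_of_complex_power)
  obtain ws1 where ws1: "length ws1 = 2^k - 1" "\<forall>Y::'k cx.
      Y ^ (2^k) - cx_of_complex c ^ (2^k) = (Y - cx_of_complex c) * prod_list (map (\<lambda>w. Y - cx_of_complex w) ws1)"
    using Suc.IH by blast
  obtain ws2 where ws2: "length ws2 = 2^k - 1" "\<forall>Y::'k cx.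
      Y ^ (2^k) - cx_of_complex d ^ (2^k) = (Y - cx_of_complex d) * prod_list (map (\<lambda>w. Y - cx_of_complex w) ws2)"
    using Suc.IH by blast
  show ?case
  proof (intro exI[of _ "ws1 @ d # ws2"] conjI allI)
    show "length (ws1 @ d # ws2) = 2 ^ Suc k - 1"
      using ws1 ws2 by simp
    fix Y :: "'k cx"
    have "Y ^ (2 ^ Suc k) - cx_of_complex c ^ (2 ^ Suc k)
        = (Y ^ (2^k) - cx_of_complex c ^ (2^k)) * (Y ^ (2^k) - cx_of_complex d ^ (2^k))"
      by (simp add: d power_mult[symmetric] power2_eq_square algebra_simps)
         (simp add: power_add[symmetric] mult_2)
    also have "\<dots> = (Y - cx_of_complex c) * prod_list (map (\<lambda>w. Y - cx_of_complex w) (ws1 @ d # ws2))"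
      unfolding ws1(2)[rule_format] ws2(2)[rule_format] by (simp add: mult_ac)
    finally show "Y ^ (2 ^ Suc k) - cx_of_complex c ^ (2 ^ Suc k)
        = (Y - cx_of_complex c) * prod_list (map (\<lambda>w. Y - cx_of_complex w) (ws1 @ d # ws2))" .
  qed
qed

text \<open>The norm of the value at \<open>x\<close> of the real quadratic polynomial with roots \<open>w\<close> and \<open>cnj w\<close>.\<close>
definition quad_norm :: "'k::real_normed_field \<Rightarrow> complex \<Rightarrow> real" where
  "quad_norm x w = norm ((x - of_real (Re w))^2 + of_real ((Im w)^2))"

lemma quad_norm_nonneg: "0 \<le> quad_norm x w"
  by (simp add: quad_norm_def)

lemma cx_normsq_diff: "cx_normsq (cx_of x - cx_of_complex w) = quad_norm x w"
  by (simp add: cx_normsq_def cx_of_def cx_of_complex_def quad_norm_def power2_eq_square of_real_mult)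

lemma prod_list_ge_power:
  fixes h :: "'a \<Rightarrow> real"
  assumes "\<forall>w\<in>set ws. b \<le> h w" "0 \<le> b"
  shows "b ^ length ws \<le> prod_list (map h ws)"
  using assms by (induction ws) (auto intro: mult_mono order_trans[OF \<open>0 \<le> b\<close>])

lemma cx_normsq_quadratic_factor:
  fixes x :: "'k::real_normed_field"
  assumes "s^2 = w - complex_of_real (c^2)"
  shows "cx_normsq (cx_of ((x - of_real a)^2 + of_real (c^2)) - cx_of_complex w)
       = quad_norm x (of_real a + s) * quad_norm x (of_real a - s)"
proof -
  have "cx_of_complex w = (cx_of_complex s ^ 2 + cx_of_complex (of_real (c^2)) :: 'k cx)"
    using assms by (metis cx_of_complex_hom(3) cx_of_complex_power diff_add_cancel)
  moreover have "cx_of ((x - of_real a)^2 + of_real (c^2))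
      = (cx_of x - cx_of_complex (of_real a))^2 + (cx_of_complex (of_real (c^2)) :: 'k cx)"
    by (simp add: cx_of_hom cx_of_power del: of_real_power)
  ultimately have "(cx_of ((x - of_real a)^2 + of_real (c^2)) - cx_of_complex w :: 'k cx)
      = (cx_of x - cx_of_complex (of_real a + s)) * (cx_of x - cx_of_complex (of_real a - s))"
    by (simp add: cx_of_complex_hom power2_eq_square algebra_simps)
  then show ?thesis by (simp only: cx_normsq_mult cx_normsq_diff)
qed

lemma cx_normsq_pow_diff_le:
  fixes g :: "'k::real_normed_field"
  assumes "0 \<le> e"
  shows "cx_normsq (cx_of g ^ n - cx_of_complex (complex_of_real (-e)) ^ n)
           \<le> (norm g ^ n + e ^ n) ^ 2"
proof -
  have "cx_normsq (cx_of g ^ n - cx_of_complex (complex_of_real (-e)) ^ n)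
      = norm (g ^ n - of_real ((-e) ^ n)) ^ 2"
    by (simp add: cx_of_hom cx_of_power cx_of_complex_power cx_normsq_cx_of[symmetric]
        del: of_real_minus)
  also have "\<dots> \<le> (norm (g ^ n) + norm (of_real ((-e) ^ n) :: 'k)) ^ 2"
    by (intro power_mono norm_triangle_ineq4) simp
  also have "\<dots> = (norm g ^ n + e ^ n) ^ 2"
    using assms by (simp add: norm_power power_abs)
  finally show ?thesis .
qed

lemma cx_normsq_quadratic_ge:
  fixes x :: "'k::real_normed_field"
  assumes "\<forall>w. m \<le> quad_norm x w" "0 \<le> m"
  shows "m * m \<le> cx_normsq (cx_of ((x - of_real a)^2 + of_real (c^2)) - cx_of_complex w)"
proof -
  have "(csqrt (w - complex_of_real (c^2)))^2 = w - complex_of_real (c^2)" by simp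
  from cx_normsq_quadratic_factor[OF this, of x a] assms show ?thesis
    by (auto intro!: mult_mono simp: quad_norm_nonneg)
qed

text \<open>At a minimum \<open>z = a + i c\<close> of \<open>quad_norm x\<close> with value \<open>m\<close>, factor
  \<open>g^n - (-e)^n\<close>, \<open>g = (x - a)\<^sup>2 + c\<^sup>2\<close>, \<open>n = 2^k\<close>, over the roots \<open>w\<close> of \<open>Y^n - (-e)^n\<close>: every factor
  \<open>g - w\<close> has \<open>cx_normsq \<ge> m\<^sup>2\<close>, and the factor \<open>w = -e\<close> splits into \<open>quad_norm x\<close> at
  \<open>a + i \<surd>(c\<^sup>2 + e)\<close> twice.\<close>
lemma quad_norm_lift_power_bound:
  fixes x :: "'k::real_normed_field"
  assumes min: "\<forall>w. quad_norm x z \<le> quad_norm x w" and e: "0 < e"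
  shows "quad_norm x (Complex (Re z) (sqrt ((Im z)^2 + e))) * quad_norm x z ^ (2^k - 1)
           \<le> quad_norm x z ^ (2^k) + e ^ (2^k)"
proof -
  define m where "m = quad_norm x z"
  define a where "a = Re z"
  define c where "c = Im z"
  define z1 where "z1 = Complex a (sqrt (c^2 + e))"
  define g where "g = (x - of_real a)^2 + of_real (c^2)"
  define n where "n = (2::nat)^k"
  have m0: "0 \<le> m" by (simp add: m_def quad_norm_nonneg)
  have norm_g: "norm g = m" by (simp add: g_def m_def quad_norm_def a_def c_def)
  obtain ws where ws: "length ws = n - 1" "\<forall>Y::'k cx.
      Y ^ n - cx_of_complex (complex_of_real (-e)) ^ n
        = (Y - cx_of_complex (complex_of_real (-e))) * prod_list (map (\<lambda>w. Y - cx_of_complex w) ws)"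
    using cx_pow2_diff_factor[of k "complex_of_real (-e)"] unfolding n_def by blast
  have first_factor: "cx_normsq (cx_of g - cx_of_complex (complex_of_real (-e)) :: 'k cx)
      = quad_norm x z1 * quad_norm x z1"
  proof -
    define s where "s = \<i> * complex_of_real (sqrt (c^2 + e))"
    have "s^2 = complex_of_real (-e) - complex_of_real (c^2)"
      using e by (simp add: s_def power_mult_distrib of_real_power[symmetric] del: of_real_power)
    from cx_normsq_quadratic_factor[OF this, of x a]
    show ?thesis by (simp add: g_def quad_norm_def s_def z1_def)
  qed
  have "(quad_norm x z1 * quad_norm x z1) * (m * m) ^ (n - 1)
      \<le> cx_normsq (cx_of g - cx_of_complex (complex_of_real (-e)) :: 'k cx)
         * prod_list (map (\<lambda>w. cx_normsq (cx_of g - cx_of_complex w :: 'k cx)) ws)"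
    unfolding first_factor
    using cx_normsq_quadratic_ge[OF min[folded m_def] m0, of a c, folded g_def] m0 ws(1) prod_list_ge_power[of ws "m * m"]
    by (intro mult_left_mono) (auto simp: quad_norm_nonneg)
  also have "\<dots> = cx_normsq (cx_of g ^ n - cx_of_complex (complex_of_real (-e)) ^ n :: 'k cx)"
    by (simp only: ws(2)[rule_format] cx_normsq_mult cx_normsq_prod_list)
  also have "\<dots> \<le> (m ^ n + e ^ n) ^ 2"
    using cx_normsq_pow_diff_le[of e g n] e by (simp add: norm_g)
  finally have "(quad_norm x z1 * m ^ (n - 1))^2 \<le> (m ^ n + e ^ n) ^ 2"
    by (simp add: power_mult_distrib power2_eq_square mult_ac)
  then have "quad_norm x z1 * m ^ (n - 1) \<le> m ^ n + e ^ n"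
    by (rule power2_le_imp_le) (use m0 e in simp)
  then show ?thesis by (simp add: n_def z1_def m_def a_def c_def)
qed

lemma quad_norm_lift:
  fixes x :: "'k::real_normed_field"
  assumes min: "\<forall>w. quad_norm x z \<le> quad_norm x w" and pos: "0 < quad_norm x z"
  shows "quad_norm x (Complex (Re z) (sqrt ((Im z)^2 + quad_norm x z / 2))) \<le> quad_norm x z"
proof (rule ccontr)
  define m where "m = quad_norm x z"
  define e where "e = m / 2"
  define q where "q = quad_norm x (Complex (Re z) (sqrt ((Im z)^2 + e)))"
  have m0: "0 < m" "0 < e" using pos by (auto simp: m_def e_def)
  assume "\<not> ?thesis"
  then have "0 < (q - m) / e" using m0 by (simp add: q_def m_def e_def)
  then obtain k where k: "(1/2::real) ^ k < (q - m) / e"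
    using real_arch_pow_inv[of _ "1/2"] by auto
  define N where "N = (2::nat)^k - 1"
  have "k \<le> N" unfolding N_def using less_exp[of k] by linarith
  then have N: "(1/2::real) ^ N \<le> (1/2) ^ k" by (intro power_decreasing) auto
  have "q * m ^ N \<le> m ^ Suc N + e ^ Suc N"
    using quad_norm_lift_power_bound[OF min, of e k] m0 by (simp add: N_def q_def m_def)
  also have "\<dots> = m ^ N * (m + e * (1/2)^N)"
    using m0 by (simp add: e_def power_divide field_simps)
  finally have "q \<le> m + e * (1/2)^N"
    using m0 by (simp add: mult_le_cancel_left_pos)
  also have "\<dots> \<le> m + e * (1/2)^k"
    using m0 N by simp
  also have "\<dots> < q"
    using k m0 by (simp add: field_simps)
  finally show False by simp
qed

lemma quad_norm_ge: "t^2 - norm ((x - of_real a)^2) \<le> quad_norm x (Complex a t)"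
proof -
  have "norm (of_real (t^2) :: 'a) \<le> norm ((x - of_real a)^2 + of_real (t^2)) + norm ((x - of_real a)^2)"
    by (metis add_diff_cancel_left' norm_triangle_ineq4 add.commute)
  then show ?thesis by (simp add: quad_norm_def norm_power power2_abs)
qed

lemma quad_norm_ge_norm_sq:
  fixes x :: "'k::real_normed_field"
  assumes "3 * norm x + 1 < cmod w"
  shows "norm x ^ 2 \<le> quad_norm x w"
proof -
  define r where "r = cmod w"
  define a where "a = Re w"
  define nx where "nx = norm x"
  have "r^2 = (Re w)^2 + (Im w)^2" by (simp add: r_def cmod_power2)
  then have expand: "(x - of_real (Re w))^2 + of_real ((Im w)^2) = of_real (r^2) - (of_real (2*a) * x - x^2)"
    by (simp add: a_def power2_eq_square algebra_simps)
  have "norm (of_real (2*a) * x - x^2) \<le> 2 * \<bar>a\<bar> * nx + nx^2"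
    using norm_triangle_ineq4[of "of_real (2*a) * x" "x^2"] by (simp add: norm_mult norm_power nx_def)
  also have "\<dots> \<le> 2 * r * nx + nx^2"
    using abs_Re_le_cmod[of w] by (simp add: a_def r_def mult_right_mono nx_def)
  finally have "norm (of_real (2*a) * x - x^2) \<le> 2 * r * nx + nx^2" .
  moreover have "r^2 \<le> quad_norm x w + norm (of_real (2*a) * x - x^2)"
    unfolding quad_norm_def expand
    using norm_triangle_ineq2[of "(of_real (r^2)::'k)" "of_real (2*a) * x - x^2"]
    by (simp add: norm_power power2_abs)
  moreover have "(3 * nx + 1) * (nx + 1) \<le> r * (r - 2 * nx)"
    using assms by (intro mult_mono) (auto simp: r_def nx_def)
  moreover have "r * (r - 2 * nx) = r^2 - 2 * r * nx" "(3 * nx + 1) * (nx + 1) = 3 * nx^2 + 4 * nx + 1"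
    by (simp_all add: power2_eq_square algebra_simps)
  moreover have "0 \<le> nx" by (simp add: nx_def)
  ultimately have "nx^2 \<le> quad_norm x w"
    using zero_le_power2[of nx] by linarith
  then show ?thesis by (simp add: nx_def)
qed

lemma quad_norm_attains_min:
  fixes x :: "'k::real_normed_field"
  obtains z0 where "\<And>w. quad_norm x z0 \<le> quad_norm x w"
proof -
  define R where "R = 3 * norm x + 1"
  have "continuous_on (cball 0 R) (quad_norm x)"
    unfolding quad_norm_def by (intro continuous_intros)
  moreover have "cball 0 R \<noteq> {}"
    unfolding R_def cball_eq_empty using norm_ge_zero[of x] by linarith
  ultimately obtain z0 where z0: "z0 \<in> cball 0 R" "\<forall>y\<in>cball 0 R. quad_norm x z0 \<le> quad_norm x y"
    using continuous_attains_inf[OF compact_cball] by blast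
  have "quad_norm x z0 \<le> quad_norm x w" for w
  proof (cases "w \<in> cball 0 R")
    case False
    then have "norm x ^ 2 \<le> quad_norm x w"
      by (intro quad_norm_ge_norm_sq) (simp add: R_def)
    moreover have "quad_norm x z0 \<le> quad_norm x 0"
      using z0 by (simp add: R_def)
    ultimately show ?thesis by (simp add: quad_norm_def norm_power)
  qed (use z0 in auto)
  then show ?thesis by (rule that)
qed

text \<open>If the minimum \<open>m\<close> of \<open>quad_norm x\<close> were positive, \<open>quad_norm_lift\<close> would produce minima
  \<open>a + i t\<^sub>j\<close> with \<open>t\<^sub>j\<^sup>2 = c\<^sup>2 + j m/2\<close>, contradicting \<open>quad_norm_ge\<close>.\<close>
lemma real_normed_field_quadratic_root:
  fixes x :: "'k::real_normed_field"
  shows "\<exists>a b::real. (x - of_real a)^2 + of_real (b^2) = 0"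
proof -
  obtain z0 where min: "\<And>w. quad_norm x z0 \<le> quad_norm x w"
    using quad_norm_attains_min by blast
  define m where "m = quad_norm x z0"
  define a where "a = Re z0"
  define c where "c = Im z0"
  define t where "t j = sqrt (c^2 + real j * (m / 2))" for j :: nat
  have "m \<le> 0"
  proof (rule ccontr)
    assume "\<not> m \<le> 0"
    then have m0: "0 < m" by simp
    have minimum: "quad_norm x (Complex a (t j)) = m" for j
    proof (induction j)
      case 0
      show ?case by (simp add: t_def m_def a_def c_def quad_norm_def)
    next
      case (Suc j)
      have "sqrt ((t j)^2 + m / 2) = t (Suc j)"
        using m0 by (simp add: t_def algebra_simps)
      then have "quad_norm x (Complex a (t (Suc j))) \<le> m"
        using quad_norm_lift[of x "Complex a (t j)"] Suc min m0 by (simp add: m_def)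
      then show ?case using min[of "Complex a (t (Suc j))"] by (simp add: m_def)
    qed
    define K where "K = norm ((x - of_real a)^2 :: 'k)"
    obtain j :: nat where j: "m + K < real j * (m / 2)"
      using reals_Archimedean3[of "m/2"] m0 by (meson half_gt_zero)
    have "(t j)^2 = c^2 + real j * (m / 2)" using m0 by (simp add: t_def)
    then have "c^2 + real j * (m / 2) - K \<le> m"
      using quad_norm_ge[of "t j" x a] minimum[of j] by (simp add: K_def)
    then show False using j by (smt (verit) zero_le_power2)
  qed
  then have "m = 0" using quad_norm_nonneg[of x z0] by (simp add: m_def)
  then show ?thesis by (auto simp: m_def quad_norm_def)
qed

lemma real_normed_field_real_plus_sqrt_minus_one:
  fixes y :: "'k::real_normed_field"
  shows "\<exists>a b q. y = of_real a + of_real b * q \<and> (b = 0 \<or> q * q = -1)"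
proof -
  obtain a b where ab: "(y - of_real a)^2 + of_real (b^2) = 0"
    using real_normed_field_quadratic_root by blast
  define q where "q = (y - of_real a) / of_real b"
  have "(y - of_real a) * (y - of_real a) = - (of_real b * of_real b)" using ab
    by (simp add: power2_eq_square eq_neg_iff_add_eq_0)
  then have "b = 0 \<or> q * q = -1"
    by (simp add: q_def times_divide_times_eq)
  show ?thesis
  proof (cases "b = 0")
    case True
    then show ?thesis using ab by (intro exI[of _ a] exI[of _ 0]) simp
  next
    case False
    then show ?thesis
      using \<open>b = 0 \<or> q * q = -1\<close> by (intro exI[of _ a] exI[of _ b] exI[of _ q]) (simp add: q_def)
  qed
qed

lemma real_normed_field_imaginary_unit:
  fixes y0 :: "'k::real_normed_field"
  assumes "y0 \<notin> range of_real"
  obtains j :: 'k where "j * j = -1" "\<And>y. \<exists>\<alpha> \<beta>. y = of_real \<alpha> + of_real \<beta> * j"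
proof -
  obtain a b j where j: "y0 = of_real a + of_real b * j" "b = 0 \<or> j * j = -1"
    using real_normed_field_real_plus_sqrt_minus_one by blast
  with assms have jj: "j * j = -1" by auto
  have "\<exists>\<alpha> \<beta>. y = of_real \<alpha> + of_real \<beta> * j" for y
  proof -
    obtain a' b' q where q: "y = of_real a' + of_real b' * q" "b' = 0 \<or> q * q = -1"
      using real_normed_field_real_plus_sqrt_minus_one by blast
    consider "b' = 0" | "q * q = -1" using q(2) by blast
    then show ?thesis
    proof cases
      case 1
      then show ?thesis using q(1) by (intro exI[of _ a'] exI[of _ 0]) simp
    next
      case 2
      then have "(q - j) * (q + j) = 0" using jj by (simp add: algebra_simps)
      then have "q = j \<or> q = - j" by (simp add: eq_neg_iff_add_eq_0)
      then show ?thesis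
        using q(1) by (metis mult_minus_left mult_minus_right of_real_minus)
    qed
  qed
  with jj that show ?thesis by blast
qed

lemma imaginary_unit_coordinates_bound:
  fixes j :: "'k::real_normed_field"
  assumes jj: "j * j = -1" and y: "norm (of_real \<alpha> + of_real \<beta> * j :: 'k) \<le> 1"
  shows "\<bar>\<alpha>\<bar> \<le> 2" "\<bar>\<beta>\<bar> \<le> 2"
proof -
  have "norm j * norm j = 1" using jj by (metis norm_minus_cancel norm_mult norm_one)
  then have nj: "norm j = 1" by (metis abs_norm_cancel abs_square_eq_1 power2_eq_square)
  define y where "y = of_real \<alpha> + of_real \<beta> * j"
  have "y * (of_real \<alpha> - of_real \<beta> * j) = of_real \<alpha> * of_real \<alpha> - of_real \<beta> * of_real \<beta> * (j * j)"
    unfolding y_def by (simp add: algebra_simps)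
  also have "\<dots> = of_real (\<alpha>^2 + \<beta>^2)"
    unfolding jj by (simp add: power2_eq_square)
  finally have "\<alpha>^2 + \<beta>^2 = norm y * norm (of_real \<alpha> - of_real \<beta> * j :: 'k)"
    by (metis norm_mult norm_of_real abs_of_nonneg sum_power2_ge_zero)
  also have "\<dots> \<le> 1 * (\<bar>\<alpha>\<bar> + \<bar>\<beta>\<bar>)"
    using y norm_triangle_ineq4[of "of_real \<alpha> :: 'k" "of_real \<beta> * j"]
    by (intro mult_mono) (auto simp: y_def norm_mult nj)
  finally have "(\<bar>\<alpha>\<bar> - 1/2)^2 + (\<bar>\<beta>\<bar> - 1/2)^2 \<le> (1/2)^2 + (1/2)^2"
    by (simp add: power2_eq_square algebra_simps)
  moreover have "(1/2::real)^2 + (1/2)^2 \<le> (3/2)^2" by (simp add: power2_eq_square)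
  ultimately have "(\<bar>\<alpha>\<bar> - 1/2)^2 \<le> (3/2)^2" "(\<bar>\<beta>\<bar> - 1/2)^2 \<le> (3/2)^2"
    using zero_le_power2[of "\<bar>\<alpha>\<bar> - 1/2"] zero_le_power2[of "\<bar>\<beta>\<bar> - 1/2"] by linarith+
  then have "\<bar>\<alpha>\<bar> - 1/2 \<le> 3/2" "\<bar>\<beta>\<bar> - 1/2 \<le> 3/2"
    by (simp_all only: power2_le_imp_le[of _ "3/2"])
  then show "\<bar>\<alpha>\<bar> \<le> 2" "\<bar>\<beta>\<bar> \<le> 2" by simp_all
qed

lemma compact_cball_real_normed_field: "compact (cball (0::'k::real_normed_field) 1)"
proof (cases "range (of_real :: real \<Rightarrow> 'k) = UNIV")
  case True
  have "cball (0::'k) 1 \<subseteq> of_real ` {-1..1}"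
  proof
    fix y :: 'k assume y: "y \<in> cball 0 1"
    obtain r where "y = of_real r" using True by (metis rangeE UNIV_I)
    with y show "y \<in> of_real ` {-1..1}" by (auto simp: abs_le_iff)
  qed
  then have "cball (0::'k) 1 = of_real ` {-1..1}" by auto
  moreover have "compact ((of_real :: real \<Rightarrow> 'k) ` {-1..1})"
    by (intro compact_continuous_image continuous_intros) auto
  ultimately show ?thesis by simp
next
  case False
  then obtain j :: 'k where jj: "j * j = -1" and span: "\<And>y. \<exists>\<alpha> \<beta>. y = of_real \<alpha> + of_real \<beta> * j"
    using real_normed_field_imaginary_unit by blast
  define \<psi> where "\<psi> = (\<lambda>p::real \<times> real. of_real (fst p) + of_real (snd p) * j)"
  have "cball 0 1 \<subseteq> \<psi> ` ({-2..2} \<times> {-2..2})"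
  proof
    fix y :: 'k assume y: "y \<in> cball 0 1"
    obtain \<alpha> \<beta> where y_eq: "y = of_real \<alpha> + of_real \<beta> * j" using span by blast
    with y imaginary_unit_coordinates_bound[OF jj, of \<alpha> \<beta>]
    show "y \<in> \<psi> ` ({-2..2} \<times> {-2..2})"
      by (intro image_eqI[of _ _ "(\<alpha>, \<beta>)"]) (auto simp: \<psi>_def abs_le_iff)
  qed
  moreover have "compact (\<psi> ` ({-2..2} \<times> {-2..2}))"
    unfolding \<psi>_def by (intro compact_continuous_image continuous_intros compact_Times compact_Icc)
  ultimately show ?thesis
    using compact_Int_closed[of "\<psi> ` ({-2..2} \<times> {-2..2})" "cball 0 1"] by (simp add: Int_absorb1)
qed

section \<open>Topologies given by seminorms\<close>

lemma istopology_lc: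
  fixes P :: "('a::ab_group_add \<Rightarrow> real) set"
  shows "istopology (\<lambda>U. U \<subseteq> V \<and>
     (\<forall>x\<in>U. \<exists>F \<epsilon>. finite F \<and> F \<subseteq> P \<and> \<epsilon> > 0 \<and> {y\<in>V. \<forall>p\<in>F. p (y - x) < \<epsilon>} \<subseteq> U))"
  unfolding istopology_def
proof (rule conjI; intro allI impI)
  fix S T
  assume S: "S \<subseteq> V \<and> (\<forall>x\<in>S. \<exists>F \<epsilon>. finite F \<and> F \<subseteq> P \<and> \<epsilon> > 0 \<and> {y\<in>V. \<forall>p\<in>F. p (y - x) < \<epsilon>} \<subseteq> S)"
     and T: "T \<subseteq> V \<and> (\<forall>x\<in>T. \<exists>F \<epsilon>. finite F \<and> F \<subseteq> P \<and> \<epsilon> > 0 \<and> {y\<in>V. \<forall>p\<in>F. p (y - x) < \<epsilon>} \<subseteq> T)"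
  show "S \<inter> T \<subseteq> V \<and> (\<forall>x\<in>S \<inter> T. \<exists>F \<epsilon>. finite F \<and> F \<subseteq> P \<and> \<epsilon> > 0 \<and> {y\<in>V. \<forall>p\<in>F. p (y - x) < \<epsilon>} \<subseteq> S \<inter> T)"
  proof (intro conjI ballI)
    show "S \<inter> T \<subseteq> V" using S by blast
    fix x assume x: "x \<in> S \<inter> T"
    obtain F1 e1 where 1: "finite F1" "F1 \<subseteq> P" "e1 > 0" "{y\<in>V. \<forall>p\<in>F1. p (y - x) < e1} \<subseteq> S"
      using S x by blast
    obtain F2 e2 where 2: "finite F2" "F2 \<subseteq> P" "e2 > 0" "{y\<in>V. \<forall>p\<in>F2. p (y - x) < e2} \<subseteq> T"
      using T x by blast
    have "{y\<in>V. \<forall>p\<in>F1 \<union> F2. p (y - x) < min e1 e2} \<subseteq> S \<inter> T"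
      using 1(4) 2(4) by auto
    with 1 2 show "\<exists>F \<epsilon>. finite F \<and> F \<subseteq> P \<and> \<epsilon> > 0 \<and> {y\<in>V. \<forall>p\<in>F. p (y - x) < \<epsilon>} \<subseteq> S \<inter> T"
      by (intro exI[of _ "F1 \<union> F2"] exI[of _ "min e1 e2"]) auto
  qed
next
  fix K
  assume "\<forall>U\<in>K. U \<subseteq> V \<and> (\<forall>x\<in>U. \<exists>F \<epsilon>. finite F \<and> F \<subseteq> P \<and> \<epsilon> > 0 \<and> {y\<in>V. \<forall>p\<in>F. p (y - x) < \<epsilon>} \<subseteq> U)"
  then show "\<Union>K \<subseteq> V \<and> (\<forall>x\<in>\<Union>K. \<exists>F \<epsilon>. finite F \<and> F \<subseteq> P \<and> \<epsilon> > 0 \<and> {y\<in>V. \<forall>p\<in>F. p (y - x) < \<epsilon>} \<subseteq> \<Union>K)"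
    by (meson Sup_upper Union_least order_trans UnionE)
qed

lemma openin_lc:
  fixes P :: "('a::ab_group_add \<Rightarrow> real) set"
  shows "openin (lc_topology V P) U \<longleftrightarrow> U \<subseteq> V \<and>
     (\<forall>x\<in>U. \<exists>F \<epsilon>. finite F \<and> F \<subseteq> P \<and> \<epsilon> > 0 \<and> {y\<in>V. \<forall>p\<in>F. p (y - x) < \<epsilon>} \<subseteq> U)"
  unfolding lc_topology_def using istopology_lc[of V P] by simp

lemma topspace_lc [simp]:
  fixes P :: "('a::ab_group_add \<Rightarrow> real) set"
  shows "topspace (lc_topology V P) = V"
proof
  show "topspace (lc_topology V P) \<subseteq> V" unfolding topspace_def openin_lc by blast
  have "openin (lc_topology V P) V"
    unfolding openin_lc by (intro conjI ballI exI[of _ "{}"] exI[of _ "1::real"]) auto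
  then show "V \<subseteq> topspace (lc_topology V P)" by (rule openin_subset)
qed

lemma continuous_map_lc_seminorm_bound:
  fixes h :: "'a::ab_group_add \<Rightarrow> 'b::real_normed_vector"
  assumes q: "q \<in> P" and bound: "\<And>y z. y \<in> V \<Longrightarrow> z \<in> V \<Longrightarrow> norm (h y - h z) \<le> q (y - z)"
  shows "continuous_map (lc_topology V P) euclidean h"
  unfolding continuous_map_def
proof (intro conjI allI impI)
  show "h \<in> topspace (lc_topology V P) \<rightarrow> topspace euclidean" by simp
  fix U :: "'b set" assume "openin euclidean U"
  then have U: "open U" by simp
  show "openin (lc_topology V P) {y \<in> topspace (lc_topology V P). h y \<in> U}"
    unfolding openin_lc
  proof (intro conjI ballI)
    fix y0 assume y0: "y0 \<in> {y \<in> topspace (lc_topology V P). h y \<in> U}"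
    then obtain e where e: "0 < e" "ball (h y0) e \<subseteq> U"
      using U open_contains_ball by force
    have "{y\<in>V. \<forall>p\<in>{q}. p (y - y0) < e} \<subseteq> {y \<in> topspace (lc_topology V P). h y \<in> U}"
    proof
      fix y assume y: "y \<in> {y\<in>V. \<forall>p\<in>{q}. p (y - y0) < e}"
      then have "h y \<in> ball (h y0) e"
        using bound[of y y0] y0 by (simp add: dist_norm norm_minus_commute)
      with e y show "y \<in> {y \<in> topspace (lc_topology V P). h y \<in> U}" by auto
    qed
    with q e show "\<exists>F \<epsilon>. finite F \<and> F \<subseteq> P \<and> \<epsilon> > 0 \<and> {y\<in>V. \<forall>p\<in>F. p (y - y0) < \<epsilon>}
        \<subseteq> {y \<in> topspace (lc_topology V P). h y \<in> U}"
      by (intro exI[of _ "{q}"] exI[of _ e]) auto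
  qed auto
qed

lemma Hausdorff_space_separating_maps:
  fixes X :: "'a topology"
  assumes "\<And>x y. x \<in> topspace X \<Longrightarrow> y \<in> topspace X \<Longrightarrow> x \<noteq> y \<Longrightarrow>
             \<exists>h :: 'a \<Rightarrow> 'b::metric_space. continuous_map X euclidean h \<and> h x \<noteq> h y"
  shows "Hausdorff_space X"
  unfolding Hausdorff_space_def
proof clarify
  fix x y assume x: "x \<in> topspace X" and y: "y \<in> topspace X" and "x \<noteq> y"
  then obtain h :: "'a \<Rightarrow> 'b" where h: "continuous_map X euclidean h" "h x \<noteq> h y"
    using assms by blast
  then obtain U V where UV: "open U" "open V" "h x \<in> U" "h y \<in> V" "disjnt U V"
    using Hausdorff_space_euclidean[where 'a='b] unfolding Hausdorff_space_def by (metis open_openin UNIV_I topspace_euclidean)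
  have "openin X {z \<in> topspace X. h z \<in> U}" "openin X {z \<in> topspace X. h z \<in> V}"
    using h(1) UV by (simp_all add: openin_continuous_map_preimage)
  moreover have "disjnt {z \<in> topspace X. h z \<in> U} {z \<in> topspace X. h z \<in> V}"
    using UV(5) by (auto simp: disjnt_def)
  ultimately show "\<exists>U V. openin X U \<and> openin X V \<and> x \<in> U \<and> y \<in> V \<and> disjnt U V"
    using x y UV(3,4) by blast
qed

lemma seminorm_on_minus:
  assumes "vector_space sm" "seminorm_on sm UNIV p"
  shows "p (- x) = p x"
proof -
  have "module sm" using assms(1) by (simp add: module_iff_vector_space)
  then have "sm (-1) x = - x"
    using module.scale_minus_left module.scale_one by metis
  moreover have "p (sm (-1) x) = p x"
    using assms(2) unfolding seminorm_on_def by simp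
  ultimately show ?thesis by simp
qed

lemma seminorm_on_zero:
  assumes "vector_space sm" "seminorm_on sm UNIV p"
  shows "p 0 = 0"
proof -
  have "module sm" using assms(1) by (simp add: module_iff_vector_space)
  then have "sm 0 0 = 0" by (rule module.scale_zero_left)
  then show ?thesis
    using assms(2) unfolding seminorm_on_def by (metis norm_zero mult_zero_left UNIV_I)
qed

lemma Hausdorff_space_lchs:
  fixes sm :: "'k::real_normed_field \<Rightarrow> 'e::ab_group_add \<Rightarrow> 'e"
  assumes vs: "vector_space sm" and lchs: "lchs sm UNIV P"
  shows "Hausdorff_space (lc_topology UNIV P)"
proof (rule Hausdorff_space_separating_maps)
  fix x y :: 'e assume "x \<noteq> y"
  then obtain p where p: "p \<in> P" "p (x - y) \<noteq> 0"
    using lchs unfolding lchs_def by (metis UNIV_I right_minus_eq)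
  have sn: "seminorm_on sm UNIV p" using lchs p(1) unfolding lchs_def by blast
  have tri: "p (a + b) \<le> p a + p b" for a b using sn unfolding seminorm_on_def by blast
  have "\<bar>p (a - y) - p (b - y)\<bar> \<le> p (a - b)" for a b
    using tri[of "a - b" "b - y"] tri[of "b - a" "a - y"] seminorm_on_minus[OF vs sn, of "a - b"]
    by (simp add: abs_le_iff)
  then have "continuous_map (lc_topology UNIV P) euclidean (\<lambda>a. p (a - y))"
    using p(1) by (intro continuous_map_lc_seminorm_bound) auto
  moreover have "p (x - y) \<noteq> p (y - y)"
    using p(2) seminorm_on_zero[OF vs sn] by simp
  ultimately show "\<exists>h :: 'e \<Rightarrow> real. continuous_map (lc_topology UNIV P) euclidean h \<and> h x \<noteq> h y"
    by blast
qed

section \<open>Partial derivatives\<close>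

lemma pderiv_in_eqI:
  assumes "Hausdorff_space Z" "has_pderiv_in Z sm f n x L"
  shows "pderiv_in Z sm f n x = L"
  unfolding pderiv_in_def
proof (rule the_equality)
  fix L' assume "has_pderiv_in Z sm f n x L'"
  with assms show "L' = L"
    unfolding has_pderiv_in_def by (intro limitin_Hausdorff_unique) auto
qed (fact assms(2))

lemma C1_on_has_pderiv_in:
  assumes "Hausdorff_space Z" "C1_on \<Omega> Z sm f" "x \<in> \<Omega>"
  shows "has_pderiv_in Z sm f n x (pderiv_in Z sm f n x)"
proof -
  obtain L where L: "has_pderiv_in Z sm f n x L"
    using assms(2,3) unfolding C1_on_def by blast
  then have "pderiv_in Z sm f n x = L" by (rule pderiv_in_eqI[OF assms(1)])
  with L show ?thesis by simp
qed

lemma eventually_at_0_add_axis_in_open: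
  fixes x :: "real^'n"
  assumes "open \<Omega>" "x \<in> \<Omega>"
  shows "eventually (\<lambda>h::real. x + h *\<^sub>R axis n 1 \<in> \<Omega>) (at 0)"
proof -
  have "((\<lambda>h::real. x + h *\<^sub>R axis n 1) \<longlongrightarrow> x) (at 0)"
    by (auto intro!: tendsto_eq_intros)
  then show ?thesis using assms by (rule topological_tendstoD)
qed

lemma dual_diff:
  assumes "\<phi> \<in> dual V P" "\<psi> \<in> dual V P"
  shows "\<phi> - \<psi> \<in> dual V P"
proof -
  have "continuous_map (lc_topology V P) euclidean (\<lambda>f. \<phi> f - \<psi> f)"
    using assms unfolding dual_def by (intro continuous_map_diff) auto
  with assms show ?thesis unfolding dual_def linear_on_def fsm_def by (auto simp: algebra_simps fun_diff_def)
qed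

lemma has_pderiv_in_linear_compose:
  fixes \<delta> :: "real^'n \<Rightarrow> ('a \<Rightarrow> 'k::real_normed_field) \<Rightarrow> 'k"
  assumes "open \<Omega>" "x \<in> \<Omega>" and \<delta>: "\<And>y. y \<in> \<Omega> \<Longrightarrow> \<delta> y \<in> dual V P"
    and lin: "linear_on fsm sm (dual V P) u" and cont: "continuous_map X Z u"
    and d\<delta>: "has_pderiv_in X fsm \<delta> n x L"
  shows "has_pderiv_in Z sm (\<lambda>y. u (\<delta> y)) n x (u L)"
proof -
  define Q where "Q h = fsm (of_real (inverse h)) (\<delta> (x + h *\<^sub>R axis n 1) - \<delta> x)" for h :: real
  have "u (Q h) = sm (of_real (inverse h)) (u (\<delta> (x + h *\<^sub>R axis n 1)) - u (\<delta> x))"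
    if "x + h *\<^sub>R axis n 1 \<in> \<Omega>" for h
  proof -
    have diff: "\<delta> (x + h *\<^sub>R axis n 1) - \<delta> x \<in> dual V P"
      using \<delta> that \<open>x \<in> \<Omega>\<close> by (intro dual_diff)
    then have "u (\<delta> (x + h *\<^sub>R axis n 1) - \<delta> x) + u (\<delta> x) = u (\<delta> (x + h *\<^sub>R axis n 1))"
      using lin \<delta>[OF \<open>x \<in> \<Omega>\<close>] unfolding linear_on_def by (metis diff_add_cancel)
    with diff lin show ?thesis
      unfolding Q_def linear_on_def by (metis add_diff_cancel)
  qed
  then have "eventually (\<lambda>h. u (Q h) = sm (of_real (inverse h)) (u (\<delta> (x + h *\<^sub>R axis n 1)) - u (\<delta> x))) (at 0)"
    using eventually_at_0_add_axis_in_open[OF assms(1,2)] by (rule eventually_mono[rotated])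
  moreover have "limitin Z (\<lambda>h. u (Q h)) (u L) (at 0)"
    using continuous_map_limit[OF cont d\<delta>[unfolded has_pderiv_in_def]] by (simp add: Q_def o_def)
  ultimately show ?thesis
    unfolding has_pderiv_in_def by (rule limitin_transform_eventually)
qed

lemma has_pderiv_in_delta_eval:
  assumes d\<delta>: "has_pderiv_in X fsm (delta V) n x L"
    and eval: "continuous_map X euclidean (\<lambda>\<phi>. \<phi> f)" and "f \<in> V"
  shows "has_pderiv_in euclidean (*) f n x (L f)"
proof -
  have "limitin euclidean (\<lambda>h. fsm (of_real (inverse h)) (delta V (x + h *\<^sub>R axis n 1) - delta V x) f)
          (L f) (at 0)"
    using continuous_map_limit[OF eval d\<delta>[unfolded has_pderiv_in_def]] by (simp add: o_def)
  then show ?thesis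
    using \<open>f \<in> V\<close> by (simp add: has_pderiv_in_def fsm_def delta_def)
qed

lemma C1_on_linear_compose:
  fixes \<delta> :: "real^'n \<Rightarrow> ('a \<Rightarrow> 'k::real_normed_field) \<Rightarrow> 'k"
  assumes "open \<Omega>" and \<delta>: "\<And>y. y \<in> \<Omega> \<Longrightarrow> \<delta> y \<in> dual V P"
    and lin: "linear_on fsm sm (dual V P) u" and cont: "continuous_map X Z u"
    and "Hausdorff_space X" "Hausdorff_space Z" and C1: "C1_on \<Omega> X fsm \<delta>"
  shows "C1_on \<Omega> Z sm (\<lambda>y. u (\<delta> y)) \<and>
         (\<forall>x\<in>\<Omega>. \<forall>n. pderiv_in Z sm (\<lambda>y. u (\<delta> y)) n x = u (pderiv_in X fsm \<delta> n x))"
proof -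
  have du: "has_pderiv_in Z sm (\<lambda>y. u (\<delta> y)) n x (u (pderiv_in X fsm \<delta> n x))" if "x \<in> \<Omega>" for x n
    by (rule has_pderiv_in_linear_compose[OF \<open>open \<Omega>\<close> that \<delta> lin cont
          C1_on_has_pderiv_in[OF \<open>Hausdorff_space X\<close> C1 that]])
  then have eq: "\<forall>x\<in>\<Omega>. \<forall>n. pderiv_in Z sm (\<lambda>y. u (\<delta> y)) n x = u (pderiv_in X fsm \<delta> n x)"
    using pderiv_in_eqI[OF \<open>Hausdorff_space Z\<close>] by blast
  have "continuous_map (top_of_set \<Omega>) Z (\<lambda>x. pderiv_in Z sm (\<lambda>y. u (\<delta> y)) n x)" for n
  proof (rule continuous_map_eq)
    show "continuous_map (top_of_set \<Omega>) Z (u \<circ> (\<lambda>x. pderiv_in X fsm \<delta> n x))"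
      using C1 cont unfolding C1_on_def by (blast intro: continuous_map_compose)
  qed (use eq in simp)
  moreover have "(\<lambda>y. u (\<delta> y)) ` \<Omega> \<subseteq> topspace Z"
    using C1 cont unfolding C1_on_def continuous_map_def by blast
  ultimately show ?thesis
    using du eq unfolding C1_on_def by blast
qed

section \<open>The spaces FV(\<Omega>) and their duals\<close>

lemma fsm_diff: "fsm c f - fsm c' f = fsm (c - c') f"
  by (simp add: fsm_def fun_eq_iff left_diff_distrib)

definition disk :: "('a \<Rightarrow> 'k::real_normed_field) \<Rightarrow> ('a \<Rightarrow> 'k) set" where
  "disk f = (\<lambda>c. fsm c f) ` cball 0 1"

context
  fixes \<Omega> :: "'a set" and AP :: "('a \<Rightarrow> 'k::real_normed_field) set"
    and domT :: "'m \<Rightarrow> ('a \<Rightarrow> 'k) set" and T :: "'m \<Rightarrow> ('a \<Rightarrow> 'k) \<Rightarrow> 'w \<Rightarrow> 'k"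
    and \<omega> :: "'m \<Rightarrow> 'w set" and \<nu> :: "'j \<Rightarrow> 'm \<Rightarrow> 'w \<Rightarrow> real"
  assumes FW: "fv_framework \<Omega> AP domT T \<omega> \<nu>"
begin

lemma T_fsm: "f \<in> domT m \<Longrightarrow> T m (fsm c f) = (\<lambda>w. c * T m f w)"
  using FW unfolding fv_framework_def linear_on_def fsm_def by blast

lemma FV_fsm:
  assumes "f \<in> FV AP domT T \<omega> \<nu>"
  shows "fsm c f \<in> FV AP domT T \<omega> \<nu>"
proof -
  have "fsm c f \<in> AP" "fsm c f \<in> domT m" for m
    using FW assms unfolding fv_framework_def subspace_on_def FV_def by blast+
  moreover have "bdd_above ((\<lambda>x. norm (T m (fsm c f) x) * \<nu> j m x) ` \<omega> m)" for j m
  proof -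
    obtain B where B: "\<forall>x\<in>\<omega> m. norm (T m f x) * \<nu> j m x \<le> B"
      using assms unfolding FV_def bdd_above_def by fastforce
    have "norm (T m (fsm c f) x) * \<nu> j m x \<le> norm c * B" if "x \<in> \<omega> m" for x
      using assms T_fsm[of f m c] B that
      by (simp add: FV_def norm_mult mult.assoc mult_left_mono)
    then show ?thesis by (rule bdd_aboveI2)
  qed
  ultimately show ?thesis unfolding FV_def by simp
qed

lemma fv_sn_nonneg:
  assumes "f \<in> FV AP domT T \<omega> \<nu>"
  shows "0 \<le> fv_sn T \<omega> \<nu> j m f"
proof -
  obtain w where w: "w \<in> \<omega> m" using FW unfolding fv_framework_def by blast
  have "0 \<le> norm (T m f w) * \<nu> j m w" using FW unfolding fv_framework_def by simp
  also have "\<dots> \<le> fv_sn T \<omega> \<nu> j m f"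
    unfolding fv_sn_def by (rule cSUP_upper[OF w]) (use assms in \<open>simp add: FV_def\<close>)
  finally show ?thesis .
qed

lemma fv_sn_fsm:
  assumes "f \<in> FV AP domT T \<omega> \<nu>"
  shows "fv_sn T \<omega> \<nu> j m (fsm c f) \<le> norm c * fv_sn T \<omega> \<nu> j m f"
  unfolding fv_sn_def
proof (rule cSUP_least)
  show "\<omega> m \<noteq> {}" using FW unfolding fv_framework_def by blast
  fix x assume x: "x \<in> \<omega> m"
  have "norm (T m (fsm c f) x) * \<nu> j m x = norm c * (norm (T m f x) * \<nu> j m x)"
    using assms T_fsm[of f m c] unfolding FV_def by (simp add: norm_mult)
  also have "\<dots> \<le> norm c * (SUP x\<in>\<omega> m. norm (T m f x) * \<nu> j m x)"
    using assms x unfolding FV_def by (intro mult_left_mono cSUP_upper) auto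
  finally show "norm (T m (fsm c f) x) * \<nu> j m x \<le> norm c * (SUP x\<in>\<omega> m. norm (T m f x) * \<nu> j m x)" .
qed

lemma continuous_map_fsm_FV:
  assumes f: "f \<in> FV AP domT T \<omega> \<nu>"
  shows "continuous_map euclidean (lc_topology (FV AP domT T \<omega> \<nu>) (FV_seminorms T \<omega> \<nu>)) (\<lambda>c. fsm c f)"
  unfolding continuous_map_def
proof (intro conjI allI impI)
  show "(\<lambda>c. fsm c f) \<in> topspace euclidean \<rightarrow> topspace (lc_topology (FV AP domT T \<omega> \<nu>) (FV_seminorms T \<omega> \<nu>))"
    using FV_fsm[OF f] by simp
  fix U assume U: "openin (lc_topology (FV AP domT T \<omega> \<nu>) (FV_seminorms T \<omega> \<nu>)) U"
  have "open {c. fsm c f \<in> U}"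
    unfolding open_dist
  proof (intro ballI)
    fix c0 assume "c0 \<in> {c. fsm c f \<in> U}"
    then obtain F e where F: "finite F" "F \<subseteq> FV_seminorms T \<omega> \<nu>" "e > 0"
      "{y\<in>FV AP domT T \<omega> \<nu>. \<forall>p\<in>F. p (y - fsm c0 f) < e} \<subseteq> U"
      using U unfolding openin_lc by blast
    define M where "M = (\<Sum>p\<in>F. p f) + 1"
    have nonneg: "\<forall>p\<in>F. 0 \<le> p f"
      using F(2) fv_sn_nonneg[OF f] unfolding FV_seminorms_def by blast
    have M: "0 < M" "\<forall>p\<in>F. p f \<le> M"
    proof -
      show "0 < M" using nonneg sum_nonneg[of F "\<lambda>p. p f"] by (simp add: M_def)
      show "\<forall>p\<in>F. p f \<le> M"
        using nonneg F(1) member_le_sum[of _ F "\<lambda>p. p f"] by (fastforce simp: M_def)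
    qed
    have "fsm c f \<in> U" if c: "dist c c0 < e / M" for c
    proof -
      have "p (fsm c f - fsm c0 f) < e" if p: "p \<in> F" for p
      proof -
        obtain j m where pj: "p = fv_sn T \<omega> \<nu> j m" using p F(2) unfolding FV_seminorms_def by blast
        have "p (fsm c f - fsm c0 f) \<le> norm (c - c0) * p f"
          unfolding fsm_diff pj by (rule fv_sn_fsm[OF f])
        also have "\<dots> \<le> norm (c - c0) * M" using M p by (intro mult_left_mono) auto
        also have "\<dots> < e" using c M by (simp add: dist_norm pos_less_divide_eq)
        finally show ?thesis .
      qed
      then show ?thesis using F(4) FV_fsm[OF f] by blast
    qed
    then show "\<exists>d>0. \<forall>c. dist c c0 < d \<longrightarrow> c \<in> {c. fsm c f \<in> U}"
      using F(3) M by (intro exI[of _ "e / M"]) auto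
  qed
  then show "openin euclidean {c \<in> topspace euclidean. fsm c f \<in> U}" by simp
qed

lemma disk_kappa_seminorm:
  assumes f: "f \<in> FV AP domT T \<omega> \<nu>"
  shows "(\<lambda>\<phi>. SUP g\<in>disk f. norm (\<phi> g)) \<in> kappa_seminorms (FV AP domT T \<omega> \<nu>) (FV_seminorms T \<omega> \<nu>)"
proof -
  have "disk f \<subseteq> FV AP domT T \<omega> \<nu>" unfolding disk_def using FV_fsm[OF f] by blast
  moreover have "abs_convex fsm (disk f)"
    unfolding abs_convex_def
  proof (intro conjI ballI allI impI)
    show "disk f \<noteq> {}" unfolding disk_def by simp
    fix x y and a b :: 'k assume x: "x \<in> disk f" and y: "y \<in> disk f" and ab: "norm a + norm b \<le> 1"
    obtain c1 c2 where c: "x = fsm c1 f" "y = fsm c2 f" "norm c1 \<le> 1" "norm c2 \<le> 1"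
      using x y unfolding disk_def by auto
    have "norm (a * c1 + b * c2) \<le> norm a * norm c1 + norm b * norm c2"
      by (metis norm_mult norm_triangle_ineq)
    also have "\<dots> \<le> norm a + norm b" using c by (intro add_mono mult_left_le) auto
    finally have "norm (a * c1 + b * c2) \<le> 1" using ab by simp
    moreover have "fsm a x + fsm b y = fsm (a * c1 + b * c2) f"
      unfolding c by (simp add: fsm_def fun_eq_iff algebra_simps)
    ultimately show "fsm a x + fsm b y \<in> disk f" unfolding disk_def by auto
  qed
  moreover have "compactin (lc_topology (FV AP domT T \<omega> \<nu>) (FV_seminorms T \<omega> \<nu>)) (disk f)"
    unfolding disk_def
    by (rule image_compactin[OF _ continuous_map_fsm_FV[OF f]]) (simp add: compact_cball_real_normed_field)
  ultimately show ?thesis unfolding kappa_seminorms_def by blast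
qed

lemma continuous_map_kappa_eval:
  assumes f: "f \<in> FV AP domT T \<omega> \<nu>"
  shows "continuous_map (lc_topology (dual (FV AP domT T \<omega> \<nu>) (FV_seminorms T \<omega> \<nu>))
           (kappa_seminorms (FV AP domT T \<omega> \<nu>) (FV_seminorms T \<omega> \<nu>))) euclidean (\<lambda>\<phi>. \<phi> f)"
proof (rule continuous_map_lc_seminorm_bound[OF disk_kappa_seminorm[OF f]])
  fix \<phi> \<psi> assume \<phi>: "\<phi> \<in> dual (FV AP domT T \<omega> \<nu>) (FV_seminorms T \<omega> \<nu>)"
    and \<psi>: "\<psi> \<in> dual (FV AP domT T \<omega> \<nu>) (FV_seminorms T \<omega> \<nu>)"
  have scale: "\<phi> (fsm c f) - \<psi> (fsm c f) = c * (\<phi> f - \<psi> f)" for c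
    using \<phi> \<psi> f unfolding dual_def linear_on_def by (simp add: right_diff_distrib)
  have "bdd_above ((\<lambda>g. norm ((\<phi> - \<psi>) g)) ` disk f)"
    by (rule bdd_aboveI2[of _ _ "norm (\<phi> f - \<psi> f)"])
       (auto simp: disk_def scale norm_mult mult_left_le_one_le)
  moreover have "f \<in> disk f"
    unfolding disk_def by (rule image_eqI[of _ _ 1]) (auto simp: fsm_def)
  ultimately show "norm (\<phi> f - \<psi> f) \<le> (SUP g\<in>disk f. norm ((\<phi> - \<psi>) g))"
    using cSUP_upper by fastforce
qed

lemma Hausdorff_space_kappa:
  "Hausdorff_space (lc_topology (dual (FV AP domT T \<omega> \<nu>) (FV_seminorms T \<omega> \<nu>))
     (kappa_seminorms (FV AP domT T \<omega> \<nu>) (FV_seminorms T \<omega> \<nu>)))"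
proof (rule Hausdorff_space_separating_maps)
  fix \<phi> \<psi> assume "\<phi> \<in> topspace (lc_topology (dual (FV AP domT T \<omega> \<nu>) (FV_seminorms T \<omega> \<nu>))
       (kappa_seminorms (FV AP domT T \<omega> \<nu>) (FV_seminorms T \<omega> \<nu>)))"
    "\<psi> \<in> topspace (lc_topology (dual (FV AP domT T \<omega> \<nu>) (FV_seminorms T \<omega> \<nu>))
       (kappa_seminorms (FV AP domT T \<omega> \<nu>) (FV_seminorms T \<omega> \<nu>)))" "\<phi> \<noteq> \<psi>"
  then obtain f where "f \<in> FV AP domT T \<omega> \<nu>" "\<phi> f \<noteq> \<psi> f"
    unfolding dual_def by fastforce
  then show "\<exists>h :: _ \<Rightarrow> 'k. continuous_map (lc_topology (dual (FV AP domT T \<omega> \<nu>) (FV_seminorms T \<omega> \<nu>))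
       (kappa_seminorms (FV AP domT T \<omega> \<nu>) (FV_seminorms T \<omega> \<nu>))) euclidean h \<and> h \<phi> \<noteq> h \<psi>"
    using continuous_map_kappa_eval by blast
qed

end

lemma has_pderiv_in_delta:
  fixes AP :: "(real^'n \<Rightarrow> 'k::real_normed_field) set"
  assumes FW: "fv_framework \<Omega> AP domT T \<omega> \<nu>"
    and "has_pderiv_in (lc_topology (dual (FV AP domT T \<omega> \<nu>) (FV_seminorms T \<omega> \<nu>))
             (kappa_seminorms (FV AP domT T \<omega> \<nu>) (FV_seminorms T \<omega> \<nu>))) fsm (delta (FV AP domT T \<omega> \<nu>)) n x L"
  shows "L = (\<lambda>f. if f \<in> FV AP domT T \<omega> \<nu> then pderiv_in (euclidean :: 'k topology) (*) f n x else 0)"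
proof
  fix f
  show "L f = (if f \<in> FV AP domT T \<omega> \<nu> then pderiv_in (euclidean :: 'k topology) (*) f n x else 0)"
  proof (cases "f \<in> FV AP domT T \<omega> \<nu>")
    case True
    then show ?thesis
      using pderiv_in_eqI[OF Hausdorff_space_euclidean
          has_pderiv_in_delta_eval[OF assms(2) continuous_map_kappa_eval[OF FW True] True]] by simp
  next
    case False
    have "L \<in> dual (FV AP domT T \<omega> \<nu>) (FV_seminorms T \<omega> \<nu>)"
      using assms(2) unfolding has_pderiv_in_def limitin_def by simp
    with False show ?thesis unfolding dual_def by simp
  qed
qed

theorem proposition4p10:
  fixes \<Omega> :: "(real^'n) set"
    and AP :: "(real^'n \<Rightarrow> 'k::real_normed_field) set"
    and domT :: "'m \<Rightarrow> (real^'n \<Rightarrow> 'k) set"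
    and T :: "'m \<Rightarrow> (real^'n \<Rightarrow> 'k) \<Rightarrow> 'w \<Rightarrow> 'k"
    and \<omega> :: "'m \<Rightarrow> 'w set"
    and \<nu> :: "'j \<Rightarrow> 'm \<Rightarrow> 'w \<Rightarrow> real"
    and smE :: "'k \<Rightarrow> 'e::ab_group_add \<Rightarrow> 'e"
    and PE :: "('e \<Rightarrow> real) set"
    and u :: "((real^'n \<Rightarrow> 'k) \<Rightarrow> 'k) \<Rightarrow> 'e"
  assumes "open \<Omega>"
    and "vector_space smE" and "lchs smE UNIV PE" and "\<exists>e::'e. e \<noteq> 0"
    and "fv_framework \<Omega> AP domT T \<omega> \<nu>"
    and "dom_space \<Omega> AP domT T \<omega> \<nu>"
    and "\<forall>f\<in>FV AP domT T \<omega> \<nu>. C1_on \<Omega> (euclidean :: 'k topology) (*) f"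
    and "C1_on \<Omega> (lc_topology (dual (FV AP domT T \<omega> \<nu>) (FV_seminorms T \<omega> \<nu>))
                   (kappa_seminorms (FV AP domT T \<omega> \<nu>) (FV_seminorms T \<omega> \<nu>)))
               fsm (delta (FV AP domT T \<omega> \<nu>))"
    and "u \<in> eps_product (FV AP domT T \<omega> \<nu>) (FV_seminorms T \<omega> \<nu>) smE PE"
  shows "C1_on \<Omega> (lc_topology UNIV PE) smE (\<lambda>x. u (delta (FV AP domT T \<omega> \<nu>) x)) \<and>
         (\<forall>x\<in>\<Omega>. \<forall>n. pderiv_in (lc_topology UNIV PE) smE (\<lambda>x. u (delta (FV AP domT T \<omega> \<nu>) x)) n x
            = u (\<lambda>f. if f \<in> FV AP domT T \<omega> \<nu>
                     then pderiv_in (euclidean :: 'k topology) (*) f n x else 0))"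
proof -
  let ?V = "FV AP domT T \<omega> \<nu>" and ?P = "FV_seminorms T \<omega> \<nu>"
  let ?\<tau> = "lc_topology (dual ?V ?P) (kappa_seminorms ?V ?P)"
  have \<delta>: "delta ?V x \<in> dual ?V ?P" if "x \<in> \<Omega>" for x
    using assms(6) that unfolding dom_space_def Let_def by simp
  have u: "linear_on fsm smE (dual ?V ?P) u" "continuous_map ?\<tau> (lc_topology UNIV PE) u"
    using assms(9) unfolding eps_product_def by simp_all
  have H\<tau>: "Hausdorff_space ?\<tau>" by (rule Hausdorff_space_kappa[OF assms(5)])
  have d\<delta>: "pderiv_in ?\<tau> fsm (delta ?V) n x
      = (\<lambda>f. if f \<in> ?V then pderiv_in (euclidean :: 'k topology) (*) f n x else 0)" if "x \<in> \<Omega>" for x n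
    using has_pderiv_in_delta[OF assms(5) C1_on_has_pderiv_in[OF H\<tau> assms(8) that]] .
  have "C1_on \<Omega> (lc_topology UNIV PE) smE (\<lambda>x. u (delta ?V x)) \<and>
      (\<forall>x\<in>\<Omega>. \<forall>n. pderiv_in (lc_topology UNIV PE) smE (\<lambda>x. u (delta ?V x)) n x
         = u (pderiv_in ?\<tau> fsm (delta ?V) n x))"
    by (rule C1_on_linear_compose[OF assms(1) \<delta> u H\<tau> Hausdorff_space_lchs[OF assms(2,3)] assms(8)])
  with d\<delta> show ?thesis by simp
qed

end
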